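(* Let $f:\{0,1\}^n\to\{0,1\}$ be given by query access, let $\mathcal{I}$ be a partition of $[n]$ into $r$ parts, let $W\in\mathcal{I}$ with $|W|\ge\frac{n}{2r}$, and let $J$ be a union of parts from $\mathcal{I}\setminus\{W\}$. There is a randomized algorithm taking $(f,\mathcal{I},J,W)$ that makes $O(\log r)$ queries to $f$ such that: (1) with probability $\mathrm{SymInf}_f(\overline{J})$ it returns a part $I\in\mathcal{I}\setminus\{W\}$ disjoint from $J$, and otherwise it returns $\emptyset$; (2) if $W$ contains no asymmetric variable of $f$ and the algorithm returns a part $I\in\mathcal{I}$, then $I$ contains an asymmetric variable of $f$.
   Context: $\mathcal{S}_J$ is the set of permutations of $[n]$ fixing every element outside $J$; $\pi x$ is the vector whose $\pi(i)$-th coordinate is $x_i$. $f$ is $J$-symmetric if $f(\pi x)=f(x)$ for all $x$ and $\pi\in\mathcal{S}_J$. $\mathrm{core}(f)$ is the maximum set $J$ such that $f$ is $J$-symmetric; variables in $[n]\setminus\mathrm{core}(f)$ are called asymmetric. $\overline{J}=[n]\setminus J$. $\mathrm{SymInf}_f(S)=\Pr_{x,\pi}[f(x)\ne f(\pi x)]$ with $x$ uniform in $\{0,1\}^n$ and $\pi$ uniform in $\mathcal{S}_S$. *)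

theory Defs
  imports "HOL-Probability.Probability" "HOL-Combinatorics.Permutations" "HOL-Library.Disjoint_Sets"
begin

text \<open>Coordinates are indexed by [n] = {0..<n}. A point of the Boolean cube is a function
  nat => bool that is False outside {0..<n}.\<close>

definition cube :: "nat \<Rightarrow> (nat \<Rightarrow> bool) set" where
  "cube n = {x. \<forall>i. n \<le> i \<longrightarrow> \<not> x i}"

definition perm_act :: "(nat \<Rightarrow> nat) \<Rightarrow> (nat \<Rightarrow> bool) \<Rightarrow> (nat \<Rightarrow> bool)" where
  "perm_act \<pi> x = (\<lambda>j. x (inv \<pi> j))"

definition sym_on :: "nat \<Rightarrow> ((nat \<Rightarrow> bool) \<Rightarrow> bool) \<Rightarrow> nat set \<Rightarrow> bool" where
  "sym_on n f J \<longleftrightarrow> (\<forall>x\<in>cube n. \<forall>\<pi>. \<pi> permutes J \<longrightarrow> f (perm_act \<pi> x) = f x)"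

definition core :: "nat \<Rightarrow> ((nat \<Rightarrow> bool) \<Rightarrow> bool) \<Rightarrow> nat set" where
  "core n f = (SOME J. J \<subseteq> {0..<n} \<and> sym_on n f J \<and>
       (\<forall>K. K \<subseteq> {0..<n} \<and> sym_on n f K \<longrightarrow> card K \<le> card J))"

definition asym_vars :: "nat \<Rightarrow> ((nat \<Rightarrow> bool) \<Rightarrow> bool) \<Rightarrow> nat set" where
  "asym_vars n f = {0..<n} - core n f"

definition SymInf :: "nat \<Rightarrow> ((nat \<Rightarrow> bool) \<Rightarrow> bool) \<Rightarrow> nat set \<Rightarrow> real" where
  "SymInf n f S = measure_pmf.prob
     (pair_pmf (pmf_of_set (cube n)) (pmf_of_set {\<pi>. \<pi> permutes S}))
     {(x, \<pi>). f x \<noteq> f (perm_act \<pi> x)}"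

text \<open>Query algorithms: a deterministic query algorithm is a decision tree whose inner nodes
  query f at a point and branch on the answer; a randomized query algorithm is a probability
  distribution over such trees (the randomness is independent of f).\<close>
datatype 'a qtree = Leaf 'a | Query "nat \<Rightarrow> bool" "bool \<Rightarrow> 'a qtree"

primrec run :: "((nat \<Rightarrow> bool) \<Rightarrow> bool) \<Rightarrow> 'a qtree \<Rightarrow> 'a" where
  "run f (Leaf a) = a"
| "run f (Query x k) = run f (k (f x))"

primrec depth :: "'a qtree \<Rightarrow> nat" where
  "depth (Leaf a) = 0"
| "depth (Query x k) = Suc (max (depth (k True)) (depth (k False)))"

end

theory Submission
  imports Defs
begin

text \<open>Let U = [n] - J; it is the union of W and of the parts D avoiding J. Sample x and a
  permutation \<pi> of U. As x and \<pi> x have equally many ones in U, one can walk from x to \<pi> x by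
  steps each of which permutes the coordinates of a single part I \<in> D together with those of W,
  using W as a reservoir of ones and zeros. The potential |W| times the number of mismatched parts
  plus twice the total weight defect of the parts drops by |W| per step and is initially at most
  |D| |W| + 2n, so |W| \<ge> n/(2r) bounds the number of steps by O(r). If f(x) \<noteq> f(\<pi> x), binary
  search along the walk finds with O(log r) queries a step changing f and returns its part I; that
  step permutes I \<union> W, so I \<union> W contains an asymmetric variable, and hence so does I if W
  contains none. A part is returned exactly when f(x) \<noteq> f(\<pi> x), an event of probability
  SymInf_f(U).\<close>

definition weight :: "(nat \<Rightarrow> bool) \<Rightarrow> nat set \<Rightarrow> nat" where
  "weight z S = card {i\<in>S. z i}"

lemma weight_cong: "(\<And>i. i \<in> S \<Longrightarrow> z i = z' i) \<Longrightarrow> weight z S = weight z' S"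
  unfolding weight_def by (metis (mono_tags, lifting) Collect_cong)

lemma weight_le_card: "finite S \<Longrightarrow> weight z S \<le> card S"
  unfolding weight_def by (rule card_mono) auto

lemma weight_Un_disjoint:
  assumes "finite A" "finite B" "A \<inter> B = {}"
  shows "weight z (A \<union> B) = weight z A + weight z B"
proof -
  have "{i \<in> A \<union> B. z i} = {i\<in>A. z i} \<union> {i\<in>B. z i}" by auto
  moreover have "card ({i\<in>A. z i} \<union> {i\<in>B. z i}) = card {i\<in>A. z i} + card {i\<in>B. z i}"
    by (rule card_Un_disjoint) (use assms in auto)
  ultimately show ?thesis by (simp add: weight_def)
qed

lemma weight_UN_disjoint:
  assumes "finite D" "\<And>K. K \<in> D \<Longrightarrow> finite K"
    and "\<And>K K'. K \<in> D \<Longrightarrow> K' \<in> D \<Longrightarrow> K \<noteq> K' \<Longrightarrow> K \<inter> K' = {}"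
  shows "weight z (\<Union>D) = (\<Sum>K\<in>D. weight z K)"
proof -
  have "{i\<in>\<Union>D. z i} = (\<Union>K\<in>D. {i\<in>K. z i})" by auto
  moreover have "card (\<Union>K\<in>D. {i\<in>K. z i}) = (\<Sum>K\<in>D. card {i\<in>K. z i})"
    by (rule card_UN_disjoint) (use assms in auto)
  ultimately show ?thesis by (simp add: weight_def)
qed

lemma weight_perm_act:
  assumes "\<pi> permutes U"
  shows "weight (perm_act \<pi> x) U = weight x U"
proof -
  have "{i\<in>U. perm_act \<pi> x i} = \<pi> ` {i\<in>U. x i}"
  proof
    show "{i\<in>U. perm_act \<pi> x i} \<subseteq> \<pi> ` {i\<in>U. x i}"
    proof
      fix i assume i: "i \<in> {i\<in>U. perm_act \<pi> x i}"
      have "inv \<pi> i \<in> U" using i assms by (simp add: permutes_in_image permutes_inv)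
      moreover have "\<pi> (inv \<pi> i) = i" using assms by (simp add: permutes_inverses(1))
      ultimately show "i \<in> \<pi> ` {i\<in>U. x i}" using i by (force simp: perm_act_def)
    qed
    show "\<pi> ` {i\<in>U. x i} \<subseteq> {i\<in>U. perm_act \<pi> x i}"
      using assms by (auto simp: perm_act_def permutes_in_image permutes_inverses(2))
  qed
  moreover have "inj_on \<pi> {i\<in>U. x i}"
    using permutes_inj[OF assms] by (simp add: inj_on_def inj_def)
  ultimately show ?thesis unfolding weight_def by (simp add: card_image)
qed

lemma equal_weight_imp_perm_act:
  assumes fin: "finite S" and agree: "\<And>i. i \<notin> S \<Longrightarrow> z' i = z i"
    and wt: "weight z S = weight z' S"
  obtains \<sigma> where "\<sigma> permutes S" "z' = perm_act \<sigma> z"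
proof -
  define A1 B1 A0 B0 where "A1 = {i\<in>S. z i}" and "B1 = {i\<in>S. z' i}"
    and "A0 = {i\<in>S. \<not> z i}" and "B0 = {i\<in>S. \<not> z' i}"
  have fin': "finite A1" "finite B1" "finite A0" "finite B0"
    using fin by (auto simp: A1_def B1_def A0_def B0_def)
  have split: "S = A1 \<union> A0" "A1 \<inter> A0 = {}" "S = B1 \<union> B0" "B1 \<inter> B0 = {}"
    by (auto simp: A1_def B1_def A0_def B0_def)
  have card1: "card A1 = card B1" using wt by (simp add: weight_def A1_def B1_def)
  moreover have "card S = card A1 + card A0" "card S = card B1 + card B0"
    using split fin' by (metis card_Un_disjoint)+
  ultimately have card0: "card A0 = card B0" by simp
  obtain g1 where g1: "bij_betw g1 A1 B1" using finite_same_card_bij fin' card1 by blast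
  obtain g0 where g0: "bij_betw g0 A0 B0" using finite_same_card_bij fin' card0 by blast
  define \<sigma> where "\<sigma> i = (if i \<in> A1 then g1 i else if i \<in> A0 then g0 i else i)" for i
  have b1: "bij_betw \<sigma> A1 B1" using g1 by (subst bij_betw_cong[where g=g1]) (auto simp: \<sigma>_def)
  have b0: "bij_betw \<sigma> A0 B0" using g0 split by (subst bij_betw_cong[where g=g0]) (auto simp: \<sigma>_def)
  have "bij_betw \<sigma> (A1 \<union> A0) (B1 \<union> B0)"
    by (rule bij_betw_combine[OF b1 b0]) (use split in auto)
  then have "bij_betw \<sigma> S S" using split(1,3) by simp
  moreover have "\<sigma> i = i" if "i \<notin> S" for i using that by (simp add: \<sigma>_def A1_def A0_def)
  ultimately have perm: "\<sigma> permutes S" by (rule bij_imp_permutes)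
  have "z' (\<sigma> i) = z i" if "i \<in> S" for i
    using that b1 b0 by (cases "z i") (auto simp: A1_def A0_def B1_def B0_def bij_betw_def)
  then have "z' j = z (inv \<sigma> j)" if "j \<in> S" for j
    using that perm by (metis permutes_inv permutes_in_image permutes_inverses(1))
  moreover have "z' j = z (inv \<sigma> j)" if "j \<notin> S" for j
    using that agree permutes_inv[OF perm] by (simp add: permutes_not_in)
  ultimately have "z' = perm_act \<sigma> z" by (auto simp: perm_act_def)
  with perm show thesis by (rule that)
qed

lemma cube_finite: "finite (cube n)"
proof -
  have "cube n \<subseteq> (\<lambda>A i. i \<in> A) ` Pow {0..<n}"
  proof
    fix x assume "x \<in> cube n"
    then have "x = (\<lambda>i. i \<in> {i. x i})" "{i. x i} \<in> Pow {0..<n}"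
      by (auto simp: cube_def) (meson not_le)
    then show "x \<in> (\<lambda>A i. i \<in> A) ` Pow {0..<n}" by blast
  qed
  then show ?thesis by (rule finite_subset) simp
qed

lemma cube_nonempty: "cube n \<noteq> {}"
  by (auto simp: cube_def intro!: exI[of _ "\<lambda>_. False"])

lemma perm_act_in_cube:
  assumes "x \<in> cube n" "\<pi> permutes U" "U \<subseteq> {0..<n}"
  shows "perm_act \<pi> x \<in> cube n"
proof -
  have "inv \<pi> i = i" if "n \<le> i" for i
  proof -
    have "i \<notin> U" using that assms(3) by auto
    then show ?thesis using permutes_not_in[OF permutes_inv[OF assms(2)]] by simp
  qed
  then show ?thesis using assms(1) by (simp add: cube_def perm_act_def)
qed

lemma core_subset_and_sym_on: "core n f \<subseteq> {0..<n} \<and> sym_on n f (core n f)"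
proof -
  define S where "S = {K. K \<subseteq> {0..<n} \<and> sym_on n f K}"
  have fin: "finite S" unfolding S_def by (rule finite_subset[of _ "Pow {0..<n}"]) auto
  have "{} \<in> S" unfolding S_def sym_on_def perm_act_def by (auto simp: permutes_empty)
  then have "card ` S \<noteq> {}" by blast
  then obtain J where J: "J \<in> S" "card J = Max (card ` S)"
    using Max_in[of "card ` S"] fin by (metis finite_imageI imageE)
  then have "\<forall>K\<in>S. card K \<le> card J" using fin by simp
  with J(1) have "\<exists>J. J \<subseteq> {0..<n} \<and> sym_on n f J \<and>
      (\<forall>K. K \<subseteq> {0..<n} \<and> sym_on n f K \<longrightarrow> card K \<le> card J)"
    unfolding S_def by blast
  then show ?thesis unfolding core_def by (rule someI2_ex) blast
qed

lemma sym_on_if_disjoint_asym_vars: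
  assumes "S \<subseteq> {0..<n}" "S \<inter> asym_vars n f = {}"
  shows "sym_on n f S"
proof -
  have "S \<subseteq> core n f" using assms by (auto simp: asym_vars_def)
  then have "\<pi> permutes core n f" if "\<pi> permutes S" for \<pi>
    using that permutes_subset by blast
  then show ?thesis using core_subset_and_sym_on[of n f] by (simp add: sym_on_def)
qed

lemma perm_act_changes_imp_asym_var:
  assumes "S \<subseteq> {0..<n}" "\<sigma> permutes S" "y \<in> cube n" "f (perm_act \<sigma> y) \<noteq> f y"
  shows "S \<inter> asym_vars n f \<noteq> {}"
proof
  assume "S \<inter> asym_vars n f = {}"
  then have "sym_on n f S" by (rule sym_on_if_disjoint_asym_vars[OF assms(1)])
  then show False using assms(2-4) by (simp add: sym_on_def)
qed

definition cube_perm_pmf :: "nat \<Rightarrow> nat set \<Rightarrow> ((nat \<Rightarrow> bool) \<times> (nat \<Rightarrow> nat)) pmf" where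
  "cube_perm_pmf n U = pair_pmf (pmf_of_set (cube n)) (pmf_of_set {\<pi>. \<pi> permutes U})"

lemma set_cube_perm_pmf:
  assumes "finite U"
  shows "set_pmf (cube_perm_pmf n U) = cube n \<times> {\<pi>. \<pi> permutes U}"
proof -
  have "{\<pi>. \<pi> permutes U} \<noteq> {}" using permutes_id by blast
  then show ?thesis unfolding cube_perm_pmf_def
    using cube_finite cube_nonempty finite_permutations[OF assms] by (simp add: set_pmf_of_set)
qed

lemma prob_run_eq_SymInf:
  assumes "finite U"
    and detect: "\<And>x \<pi>. x \<in> cube n \<Longrightarrow> \<pi> permutes U \<Longrightarrow>
      run f (T x \<pi>) \<in> G \<longleftrightarrow> f x \<noteq> f (perm_act \<pi> x)"
  shows "measure_pmf.prob (map_pmf (run f) (map_pmf (case_prod T) (cube_perm_pmf n U))) G =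
    SymInf n f U"
proof -
  define X where "X = cube_perm_pmf n U"
  have restrict: "(\<lambda>p. run f (case_prod T p)) -` G \<inter> set_pmf X =
      {(x, \<pi>). f x \<noteq> f (perm_act \<pi> x)} \<inter> set_pmf X"
  proof (intro set_eqI)
    fix p :: "(nat \<Rightarrow> bool) \<times> (nat \<Rightarrow> nat)"
    obtain x \<pi> where p: "p = (x, \<pi>)" by fastforce
    show "p \<in> (\<lambda>p. run f (case_prod T p)) -` G \<inter> set_pmf X \<longleftrightarrow>
        p \<in> {(x, \<pi>). f x \<noteq> f (perm_act \<pi> x)} \<inter> set_pmf X"
      unfolding p X_def set_cube_perm_pmf[OF assms(1)] using detect[of x \<pi>]
      by (cases "x \<in> cube n \<and> \<pi> permutes U") (simp, blast)
  qed
  have "measure_pmf.prob (map_pmf (run f) (map_pmf (case_prod T) X)) G =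
      measure_pmf.prob X ((\<lambda>p. run f (case_prod T p)) -` G \<inter> set_pmf X)"
    by (simp only: map_pmf_comp measure_map_pmf measure_Int_set_pmf)
  also have "\<dots> = measure_pmf.prob X {(x, \<pi>). f x \<noteq> f (perm_act \<pi> x)}"
    by (simp only: restrict measure_Int_set_pmf)
  finally show ?thesis by (simp only: X_def cube_perm_pmf_def SymInf_def)
qed

primrec bisect :: "nat \<Rightarrow> (nat \<Rightarrow> nat \<Rightarrow> bool) \<Rightarrow> (nat \<Rightarrow> 'a) \<Rightarrow> bool \<Rightarrow> nat \<Rightarrow> nat \<Rightarrow> 'a qtree"
  where
  "bisect 0 z l b lo hi = Leaf (l lo)"
| "bisect (Suc k) z l b lo hi = (if hi \<le> Suc lo then Leaf (l lo) else
     Query (z ((lo + hi) div 2)) (\<lambda>a. if a = b then bisect k z l b ((lo + hi) div 2) hi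
                                      else bisect k z l b lo ((lo + hi) div 2)))"

lemma depth_bisect: "depth (bisect k z l b lo hi) \<le> k"
  by (induction k arbitrary: lo hi) (auto simp: max_def)

lemma run_bisect:
  "hi - lo \<le> 2 ^ k \<Longrightarrow> lo < hi \<Longrightarrow> f (z lo) = b \<Longrightarrow> f (z hi) \<noteq> b \<Longrightarrow>
   \<exists>j. lo \<le> j \<and> j < hi \<and> f (z j) \<noteq> f (z (Suc j)) \<and> run f (bisect k z l b lo hi) = l j"
proof (induction k arbitrary: lo hi)
  case 0
  then have "hi = Suc lo" by simp
  with 0 show ?case by (intro exI[of _ lo]) simp
next
  case (Suc k)
  show ?case
  proof (cases "hi \<le> Suc lo")
    case True
    then have "hi = Suc lo" using Suc.prems(2) by simp
    with Suc.prems(3,4) show ?thesis by (intro exI[of _ lo]) simp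
  next
    case False
    define m where "m = (lo + hi) div 2"
    have m: "lo < m" "m < hi" "m - lo \<le> 2 ^ k" "hi - m \<le> 2 ^ k"
      using False Suc.prems(1) by (auto simp: m_def)
    show ?thesis
    proof (cases "f (z m) = b")
      case True
      obtain j where "m \<le> j" "j < hi" "f (z j) \<noteq> f (z (Suc j))" "run f (bisect k z l b m hi) = l j"
        using Suc.IH[OF m(4) m(2) True Suc.prems(4)] by blast
      then show ?thesis using False True m by (auto simp: m_def[symmetric] intro!: exI[of _ j])
    next
      case F: False
      obtain j where "lo \<le> j" "j < m" "f (z j) \<noteq> f (z (Suc j))" "run f (bisect k z l b lo m) = l j"
        using Suc.IH[OF m(3) m(1) Suc.prems(3) F] by blast
      then show ?thesis using False F m by (auto simp: m_def[symmetric] intro!: exI[of _ j])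
    qed
  qed
qed

definition nat_dist :: "nat \<Rightarrow> nat \<Rightarrow> nat" where
  "nat_dist a b = (a - b) + (b - a)"

text \<open>D models the parts of the partition other than W that avoid J, and W the buffer.\<close>

locale buffered_parts =
  fixes D :: "nat set set" and W :: "nat set"
  assumes finite_parts: "finite D"
    and finite_part: "K \<in> D \<Longrightarrow> finite K"
    and nonempty_parts: "{} \<notin> D"
    and disjoint_parts: "K \<in> D \<Longrightarrow> K' \<in> D \<Longrightarrow> K \<noteq> K' \<Longrightarrow> K \<inter> K' = {}"
    and part_disjoint_buffer: "K \<in> D \<Longrightarrow> K \<inter> W = {}"
    and finite_buffer: "finite W"
    and buffer_nonempty: "W \<noteq> {}"
begin

text \<open>The possible outputs. If D is empty then W itself is returned, which is legitimate because
  then J \<union> W = [n].\<close>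

definition labels :: "nat set set" where
  "labels = (if D = {} then {W} else D)"

definition mismatched :: "(nat \<Rightarrow> bool) \<Rightarrow> (nat \<Rightarrow> bool) \<Rightarrow> nat set set" where
  "mismatched v z = {K\<in>D. \<exists>i\<in>K. z i \<noteq> v i}"

definition potential :: "(nat \<Rightarrow> bool) \<Rightarrow> (nat \<Rightarrow> bool) \<Rightarrow> nat" where
  "potential v z = card (mismatched v z) * card W + 2 * (\<Sum>K\<in>D. nat_dist (weight z K) (weight v K))"

definition balanced :: "(nat \<Rightarrow> bool) \<Rightarrow> (nat \<Rightarrow> bool) \<Rightarrow> bool" where
  "balanced v z \<longleftrightarrow> (\<Sum>K\<in>D. weight z K) + weight z W = (\<Sum>K\<in>D. weight v K) + weight v W"

definition exchange_path ::
    "(nat \<Rightarrow> bool) \<Rightarrow> nat \<Rightarrow> (nat \<Rightarrow> nat \<Rightarrow> bool) \<Rightarrow> (nat \<Rightarrow> nat set) \<Rightarrow> bool" where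
  "exchange_path v L z l \<longleftrightarrow> z L = v \<and>
     (\<forall>j<L. l j \<in> labels \<and> (\<forall>i. i \<notin> l j \<union> W \<longrightarrow> z (Suc j) i = z j i) \<and>
            weight (z j) (l j \<union> W) = weight (z (Suc j)) (l j \<union> W)) \<and>
     (\<forall>j\<le>L. \<forall>i. i \<notin> \<Union>D \<union> W \<longrightarrow> z j i = v i)"

lemma empty_notin_labels: "{} \<notin> labels"
  using nonempty_parts buffer_nonempty by (simp add: labels_def)

lemma labels_subset: "labels \<subseteq> insert W D"
  by (auto simp: labels_def)

lemma pairwise_disjnt_parts: "pairwise disjnt D"
  using disjoint_parts by (auto simp: pairwise_def disjnt_def)

lemma weight_Union_buffer: "weight z (\<Union>D \<union> W) = (\<Sum>K\<in>D. weight z K) + weight z W"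
proof -
  have "\<Union>D \<inter> W = {}" using part_disjoint_buffer by blast
  then have "weight z (\<Union>D \<union> W) = weight z (\<Union>D) + weight z W"
    using finite_Union[OF finite_parts finite_part] finite_buffer by (simp add: weight_Un_disjoint)
  also have "weight z (\<Union>D) = (\<Sum>K\<in>D. weight z K)"
    by (rule weight_UN_disjoint[OF finite_parts finite_part disjoint_parts])
  finally show ?thesis .
qed

lemma mismatched_sym: "mismatched v u = mismatched u v"
  by (auto simp: mismatched_def)

lemma balanced_sym: "balanced v u = balanced u v"
  by (auto simp: balanced_def)

lemma weight_unmismatched: "K \<in> D \<Longrightarrow> K \<notin> mismatched v u \<Longrightarrow> weight u K = weight v K"
  by (rule weight_cong) (auto simp: mismatched_def)

lemma potential_le: "potential v z \<le> card D * card W + 2 * card (\<Union>D)"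
proof -
  have "card (mismatched v z) \<le> card D"
    using finite_parts by (intro card_mono) (auto simp: mismatched_def)
  moreover have "(\<Sum>K\<in>D. nat_dist (weight z K) (weight v K)) \<le> (\<Sum>K\<in>D. card K)"
  proof (rule sum_mono)
    fix K assume "K \<in> D"
    then have "weight z K \<le> card K" "weight v K \<le> card K"
      using finite_part weight_le_card by auto
    then show "nat_dist (weight z K) (weight v K) \<le> card K" by (simp add: nat_dist_def)
  qed
  moreover have "(\<Sum>K\<in>D. card K) = card (\<Union>D)"
    using card_Union_disjoint[OF pairwise_disjnt_parts finite_part] by simp
  ultimately show ?thesis unfolding potential_def by (metis add_le_mono mult_le_mono1 mult_le_mono2)
qed

lemma surplus_fits_buffer:
  assumes bal: "balanced v u" and surplus: "\<And>K. K \<in> mismatched v u \<Longrightarrow> weight v K \<le> weight u K"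
    and I: "I \<in> D"
  shows "weight u I + weight u W \<le> weight v I + weight v W"
proof -
  have "(\<Sum>K\<in>D-{I}. weight v K) \<le> (\<Sum>K\<in>D-{I}. weight u K)"
    using surplus weight_unmismatched by (intro sum_mono) (metis DiffD1 order_refl)
  moreover note sum.remove[OF finite_parts I, of "weight u"] sum.remove[OF finite_parts I, of "weight v"]
  ultimately show ?thesis using bal unfolding balanced_def by linarith
qed

lemma reweighting_exists:
  assumes I: "I \<in> D" and a: "a \<le> card I" and t: "t \<le> card W"
  obtains z' where "\<And>i. i \<notin> I \<union> W \<Longrightarrow> z' i = z i" "weight z' I = a" "weight z' W = t"
    "a = weight v I \<Longrightarrow> \<forall>i\<in>I. z' i = v i"
proof -
  obtain A where A: "A \<subseteq> I" "card A = a" "a = weight v I \<Longrightarrow> A = {i\<in>I. v i}"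
  proof (cases "a = weight v I")
    case True
    then show ?thesis by (intro that[of "{i\<in>I. v i}"]) (auto simp: weight_def)
  next
    case False
    then show ?thesis using that obtain_subset_with_card_n[OF a] by metis
  qed
  obtain B where B: "B \<subseteq> W" "card B = t" using obtain_subset_with_card_n[OF t] by metis
  define z' where "z' i = (if i \<in> I then i \<in> A else if i \<in> W then i \<in> B else z i)" for i
  have "{i\<in>I. z' i} = A" "{i\<in>W. z' i} = B"
    using A(1) B(1) part_disjoint_buffer[OF I] by (auto simp: z'_def)
  then have "weight z' I = a" "weight z' W = t" using A B by (simp_all add: weight_def)
  moreover have "z' i = z i" if "i \<notin> I \<union> W" for i using that by (simp add: z'_def)
  moreover have "\<forall>i\<in>I. z' i = v i" if "a = weight v I" using A that by (simp add: z'_def)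
  ultimately show thesis using that by blast
qed

lemma weight_other_part:
  assumes "I \<in> D" "K \<in> D" "K \<noteq> I" "\<And>i. i \<notin> I \<union> W \<Longrightarrow> z' i = z i"
  shows "weight z' K = weight z K"
proof (rule weight_cong)
  fix i assume "i \<in> K"
  then have "i \<notin> I \<union> W" using assms(1-3) disjoint_parts part_disjoint_buffer by blast
  then show "z' i = z i" by (rule assms(4))
qed

lemma mismatched_update:
  assumes "I \<in> D" "\<And>i. i \<notin> I \<union> W \<Longrightarrow> z' i = z i"
  shows "mismatched v z' - {I} = mismatched v z - {I}"
proof -
  have "i \<notin> I \<union> W" if "K \<in> D" "K \<noteq> I" "i \<in> K" for K i
    using that assms(1) disjoint_parts part_disjoint_buffer by blast
  then show ?thesis using assms(2) by (auto simp: mismatched_def)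
qed

lemma sum_update:
  assumes "I \<in> D" "\<And>K. K \<in> D \<Longrightarrow> K \<noteq> I \<Longrightarrow> g' K = g K"
  shows "(\<Sum>K\<in>D. g' K) + g I = (\<Sum>K\<in>D. g K) + (g' I :: nat)"
  using sum.remove[OF finite_parts assms(1), of g] sum.remove[OF finite_parts assms(1), of g'] assms(2)
  by simp

text \<open>Repairing I removes it from the mismatched parts, which is worth |W|; otherwise I must
  move |W|/2 closer to its target weight.\<close>

lemma potential_decrease:
  assumes I: "I \<in> mismatched v z" and agree: "\<And>i. i \<notin> I \<union> W \<Longrightarrow> z' i = z i"
    and progress: "(\<forall>i\<in>I. z' i = v i) \<or>
      2 * nat_dist (weight z' I) (weight v I) + card W \<le> 2 * nat_dist (weight z I) (weight v I)"
  shows "potential v z' + card W \<le> potential v z"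
proof -
  have ID: "I \<in> D" using I by (simp add: mismatched_def)
  have fin: "finite (mismatched v z')" "finite (mismatched v z)"
    using finite_parts by (simp_all add: mismatched_def)
  have mm: "mismatched v z' - {I} = mismatched v z - {I}" by (rule mismatched_update[OF ID agree])
  have imb: "(\<Sum>K\<in>D. nat_dist (weight z' K) (weight v K)) + nat_dist (weight z I) (weight v I) =
      (\<Sum>K\<in>D. nat_dist (weight z K) (weight v K)) + nat_dist (weight z' I) (weight v I)"
    using weight_other_part[OF ID _ _ agree] by (intro sum_update[OF ID]) simp
  show ?thesis
  proof (cases "\<forall>i\<in>I. z' i = v i")
    case True
    then have "I \<notin> mismatched v z'" "weight z' I = weight v I"
      by (auto simp: mismatched_def intro: weight_cong)
    then have "card (mismatched v z') + 1 = card (mismatched v z)"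
      using mm I fin by (metis card_Diff_singleton_if Diff_empty Diff_insert0 card_Suc_Diff1
          Suc_eq_plus1)
    then have "card (mismatched v z') * card W + card W = card (mismatched v z) * card W"
      by (metis add_mult_distrib mult_1)
    then show ?thesis using imb \<open>weight z' I = weight v I\<close> by (simp add: potential_def nat_dist_def)
  next
    case False
    then have "card (mismatched v z') \<le> card (mismatched v z)"
      using mm I fin by (metis card_Diff_singleton_if card_mono Diff_insert0 insert_Diff
          Diff_subset le_refl)
    then have "card (mismatched v z') * card W \<le> card (mismatched v z) * card W"
      by (rule mult_le_mono1)
    then show ?thesis using imb progress False unfolding potential_def by linarith
  qed
qed

lemma exchange_step:
  assumes I: "I \<in> mismatched v z" and a: "a \<le> card I" and t: "t \<le> card W"
    and total: "a + t = weight z I + weight z W"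
    and progress: "a = weight v I \<or> 2 * nat_dist a (weight v I) + card W \<le> 2 * nat_dist (weight z I) (weight v I)"
    and bal: "balanced v z"
  obtains z' where "\<And>i. i \<notin> I \<union> W \<Longrightarrow> z' i = z i" "weight z (I \<union> W) = weight z' (I \<union> W)"
    "balanced v z'" "potential v z' + card W \<le> potential v z"
proof -
  have ID: "I \<in> D" using I by (simp add: mismatched_def)
  obtain z' where z': "\<And>i. i \<notin> I \<union> W \<Longrightarrow> z' i = z i" "weight z' I = a" "weight z' W = t"
    "a = weight v I \<Longrightarrow> \<forall>i\<in>I. z' i = v i"
    using reweighting_exists[OF ID a t] by metis
  have wt: "weight z (I \<union> W) = weight z' (I \<union> W)"
    using finite_part[OF ID] finite_buffer part_disjoint_buffer[OF ID] z' total
    by (simp add: weight_Un_disjoint)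
  have "(\<Sum>K\<in>D. weight z' K) + weight z I = (\<Sum>K\<in>D. weight z K) + weight z' I"
    using weight_other_part[OF ID _ _ z'(1)] by (intro sum_update[OF ID]) simp
  then have bal': "balanced v z'" using bal total z'(2,3) by (simp add: balanced_def)
  have "potential v z' + card W \<le> potential v z"
    using progress z' by (intro potential_decrease[OF I z'(1)]) auto
  then show thesis using that[of z'] z'(1) wt bal' by blast
qed

text \<open>If W is at least half full, ones flow from W into a part with a deficit; if no part has a
  deficit, the surplus of a part fits into W by balance. Symmetrically when W is less than half
  full.\<close>

lemma improving_exchange_exists:
  assumes I0: "I0 \<in> mismatched v u" and bal: "balanced v u"
  obtains I a t where "I \<in> mismatched v u" "a \<le> card I" "t \<le> card W"
    "a + t = weight u I + weight u W"
    "a = weight v I \<or> 2 * nat_dist a (weight v I) + card W \<le> 2 * nat_dist (weight u I) (weight v I)"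
proof -
  have le: "weight u I \<le> card I" "weight v I \<le> card I" if "I \<in> mismatched v u" for I
    using that weight_le_card finite_part by (auto simp: mismatched_def)
  have leW: "weight u W \<le> card W" "weight v W \<le> card W"
    using weight_le_card finite_buffer by auto
  have ID: "I0 \<in> D" using I0 by (simp add: mismatched_def)
  consider (equal_weight) I where "I \<in> mismatched v u" "weight u I = weight v I"
    | (half_full_deficit) I where "card W \<le> 2 * weight u W" "I \<in> mismatched v u" "weight u I < weight v I"
    | (half_full_surplus) "card W \<le> 2 * weight u W" "\<And>K. K \<in> mismatched v u \<Longrightarrow> weight v K < weight u K"
    | (half_empty_surplus) I where "2 * weight u W < card W" "I \<in> mismatched v u" "weight v I < weight u I"
    | (half_empty_deficit) "2 * weight u W < card W" "\<And>K. K \<in> mismatched v u \<Longrightarrow> weight u K < weight v K"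
    by (metis linorder_neqE_nat not_le)
  then show thesis
  proof cases
    case (equal_weight I)
    then show ?thesis using le leW by (intro that[of I "weight u I" "weight u W"]) auto
  next
    case (half_full_deficit I)
    define \<delta> where "\<delta> = min (weight v I - weight u I) (weight u W)"
    show ?thesis using half_full_deficit le[OF half_full_deficit(2)] leW
      by (intro that[of I "weight u I + \<delta>" "weight u W - \<delta>"]) (auto simp: \<delta>_def nat_dist_def)
  next
    case half_full_surplus
    then have "weight u I0 + weight u W \<le> weight v I0 + weight v W"
      using surplus_fits_buffer[OF bal _ ID] by (meson less_imp_le)
    then show ?thesis using half_full_surplus(2)[OF I0] le[OF I0] leW
      by (intro that[OF I0, of "weight v I0" "weight u W + (weight u I0 - weight v I0)"]) auto
  next
    case (half_empty_surplus I)
    define \<delta> where "\<delta> = min (weight u I - weight v I) (card W - weight u W)"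
    show ?thesis using half_empty_surplus le[OF half_empty_surplus(2)] leW
      by (intro that[of I "weight u I - \<delta>" "weight u W + \<delta>"]) (auto simp: \<delta>_def nat_dist_def)
  next
    case half_empty_deficit
    then have "weight v I0 + weight v W \<le> weight u I0 + weight u W"
      using surplus_fits_buffer[of u v, OF _ _ ID] bal
      by (metis balanced_sym less_imp_le mismatched_sym)
    then show ?thesis using half_empty_deficit(2)[OF I0] le[OF I0] leW
      by (intro that[OF I0, of "weight v I0" "weight u W - (weight v I0 - weight u I0)"]) auto
  qed
qed

lemma exchange_path_Nil: "exchange_path v 0 (\<lambda>_. v) l"
  by (simp add: exchange_path_def)

lemma exchange_path_Cons:
  assumes path: "exchange_path v L z l" and I: "I \<in> labels"
    and agree: "\<And>i. i \<notin> I \<union> W \<Longrightarrow> z 0 i = u i" and wt: "weight u (I \<union> W) = weight (z 0) (I \<union> W)"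
    and outside: "\<And>i. i \<notin> \<Union>D \<union> W \<Longrightarrow> u i = v i"
  shows "exchange_path v (Suc L) (case_nat u z) (case_nat I l)"
proof -
  have "case_nat I l j \<in> labels \<and>
      (\<forall>i. i \<notin> case_nat I l j \<union> W \<longrightarrow> case_nat u z (Suc j) i = case_nat u z j i) \<and>
      weight (case_nat u z j) (case_nat I l j \<union> W) = weight (case_nat u z (Suc j)) (case_nat I l j \<union> W)"
    if "j < Suc L" for j
    using that path I agree wt by (cases j) (auto simp: exchange_path_def)
  moreover have "case_nat u z j i = v i" if "j \<le> Suc L" "i \<notin> \<Union>D \<union> W" for j i
    using that path outside by (cases j) (auto simp: exchange_path_def)
  ultimately show ?thesis using path by (simp add: exchange_path_def)
qed

lemma exchange_path_single_step:
  assumes none: "mismatched v u = {}" and outside: "\<And>i. i \<notin> \<Union>D \<union> W \<Longrightarrow> u i = v i"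
    and bal: "balanced v u"
  shows "\<exists>l. exchange_path v 1 (case_nat u (\<lambda>_. v)) l"
proof -
  have agree: "u i = v i" if "i \<notin> W" for i
    using that none outside by (auto simp: mismatched_def)
  have "weight u K = weight v K" if "K \<in> D" for K
    using that none weight_unmismatched by blast
  then have wW: "weight u W = weight v W" using bal by (simp add: balanced_def)
  have "labels \<noteq> {}" by (simp add: labels_def)
  then obtain I where I: "I \<in> labels" by blast
  have "weight u (I \<union> W) = weight v (I \<union> W)"
  proof (cases "I = W")
    case False
    then have ID: "I \<in> D" using I labels_subset by blast
    then have "weight u I = weight v I" using none weight_unmismatched by blast
    then show ?thesis using wW
      weight_Un_disjoint[OF finite_part[OF ID] finite_buffer part_disjoint_buffer[OF ID]] by simp
  qed (simp add: wW)
  then have "exchange_path v 1 (case_nat u (\<lambda>_. v)) (case_nat I (\<lambda>_. I))"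
    using exchange_path_Cons[OF exchange_path_Nil I] agree outside by simp
  then show ?thesis by blast
qed

lemma exchange_path_exists:
  assumes "\<And>i. i \<notin> \<Union>D \<union> W \<Longrightarrow> u i = v i" and "balanced v u"
  shows "\<exists>L z l. z 0 = u \<and> exchange_path v L z l \<and> L * card W \<le> potential v u + card W"
  using assms
proof (induction "potential v u" arbitrary: u rule: less_induct)
  case (less u)
  show ?case
  proof (cases "mismatched v u = {}")
    case True
    then obtain l where "exchange_path v 1 (case_nat u (\<lambda>_. v)) l"
      using exchange_path_single_step less.prems by blast
    then show ?thesis by (intro exI[of _ 1] exI[of _ "case_nat u (\<lambda>_. v)"] exI[of _ l]) simp
  next
    case False
    then obtain I a t where move: "I \<in> mismatched v u" "a \<le> card I" "t \<le> card W"
      "a + t = weight u I + weight u W"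
      "a = weight v I \<or> 2 * nat_dist a (weight v I) + card W \<le> 2 * nat_dist (weight u I) (weight v I)"
      using improving_exchange_exists less.prems(2) by blast
    obtain z' where z': "\<And>i. i \<notin> I \<union> W \<Longrightarrow> z' i = u i" "weight u (I \<union> W) = weight z' (I \<union> W)"
      "balanced v z'" "potential v z' + card W \<le> potential v u"
      using exchange_step[OF move less.prems(2)] by metis
    have ID: "I \<in> D" "I \<in> labels" using move(1) by (auto simp: mismatched_def labels_def)
    then have "\<And>i. i \<notin> \<Union>D \<union> W \<Longrightarrow> z' i = v i" using z'(1) less.prems(1) by blast
    moreover have "0 < card W" using finite_buffer buffer_nonempty by (simp add: card_gt_0_iff)
    then have "potential v z' < potential v u" using z'(4) by linarith
    ultimately obtain L z l where "z 0 = z'" "exchange_path v L z l"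
        "L * card W \<le> potential v z' + card W"
      using less.hyps z'(3) by blast
    then show ?thesis
      using exchange_path_Cons[of v L z l I u] ID z' less.prems(1)
      by (intro exI[of _ "Suc L"] exI[of _ "case_nat u z"] exI[of _ "case_nat I l"]) auto
  qed
qed

definition search_tree_for :: "nat \<Rightarrow> (nat \<Rightarrow> bool) \<Rightarrow> (nat \<Rightarrow> nat) \<Rightarrow> nat set qtree \<Rightarrow> bool" where
  "search_tree_for n x \<pi> t \<longleftrightarrow> (\<forall>f.
     (run f t \<in> labels \<longleftrightarrow> f x \<noteq> f (perm_act \<pi> x)) \<and> run f t \<in> insert {} labels \<and>
     (W \<inter> asym_vars n f = {} \<longrightarrow> run f t \<noteq> {} \<longrightarrow> run f t \<inter> asym_vars n f \<noteq> {}))"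

lemma search_tree_forD:
  assumes "search_tree_for n x \<pi> t"
  shows "run f t \<in> labels \<longleftrightarrow> f x \<noteq> f (perm_act \<pi> x)" "run f t \<in> insert {} labels"
    "W \<inter> asym_vars n f = {} \<Longrightarrow> run f t \<noteq> {} \<Longrightarrow> run f t \<inter> asym_vars n f \<noteq> {}"
proof -
  have "(run f t \<in> labels \<longleftrightarrow> f x \<noteq> f (perm_act \<pi> x)) \<and> run f t \<in> insert {} labels \<and>
      (W \<inter> asym_vars n f = {} \<longrightarrow> run f t \<noteq> {} \<longrightarrow> run f t \<inter> asym_vars n f \<noteq> {})"
    using assms unfolding search_tree_for_def by (rule spec)
  then show "run f t \<in> labels \<longleftrightarrow> f x \<noteq> f (perm_act \<pi> x)" "run f t \<in> insert {} labels"
    "W \<inter> asym_vars n f = {} \<Longrightarrow> run f t \<noteq> {} \<Longrightarrow> run f t \<inter> asym_vars n f \<noteq> {}"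
    by blast+
qed

lemma exchange_path_to_perm_act:
  assumes sub: "\<Union>D \<union> W \<subseteq> {0..<n}" and x: "x \<in> cube n" and \<pi>: "\<pi> permutes \<Union>D \<union> W"
  obtains L z l where "z 0 = x" "z L = perm_act \<pi> x" "L * card W \<le> potential (perm_act \<pi> x) x + card W"
    "\<And>j. j \<le> L \<Longrightarrow> z j \<in> cube n"
    "\<And>j. j < L \<Longrightarrow> l j \<in> labels \<and> (\<exists>\<sigma>. \<sigma> permutes l j \<union> W \<and> z (Suc j) = perm_act \<sigma> (z j))"
proof -
  define v where "v = perm_act \<pi> x"
  have v: "v \<in> cube n" using perm_act_in_cube[OF x \<pi> sub] by (simp add: v_def)
  have "x i = v i" if "i \<notin> \<Union>D \<union> W" for i
    using that permutes_not_in[OF permutes_inv[OF \<pi>]] by (simp add: v_def perm_act_def)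
  moreover have "balanced v x"
    using weight_perm_act[OF \<pi>] weight_Union_buffer by (simp add: v_def balanced_def)
  ultimately obtain L z l where path: "z 0 = x" "exchange_path v L z l"
      "L * card W \<le> potential v x + card W"
    using exchange_path_exists by metis
  have "z j \<in> cube n" if "j \<le> L" for j
  proof -
    have "z j i = v i" if "n \<le> i" for i
    proof -
      have "i \<notin> \<Union>D \<union> W" using that sub by auto
      then show ?thesis using path(2) \<open>j \<le> L\<close> unfolding exchange_path_def by blast
    qed
    then show ?thesis using v by (simp add: cube_def)
  qed
  moreover have "l j \<in> labels \<and> (\<exists>\<sigma>. \<sigma> permutes l j \<union> W \<and> z (Suc j) = perm_act \<sigma> (z j))"
    if "j < L" for j
  proof -
    have step: "l j \<in> labels" "\<And>i. i \<notin> l j \<union> W \<Longrightarrow> z (Suc j) i = z j i"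
      "weight (z j) (l j \<union> W) = weight (z (Suc j)) (l j \<union> W)"
      using path(2) that by (auto simp: exchange_path_def)
    moreover have "finite (l j \<union> W)"
      using step(1) labels_subset finite_part finite_buffer by blast
    ultimately show ?thesis using equal_weight_imp_perm_act by metis
  qed
  moreover have "z L = v" using path(2) by (simp add: exchange_path_def)
  ultimately show thesis using that[of z L l] path(1,3) unfolding v_def by blast
qed

lemma search_tree_exists:
  assumes sub: "\<Union>D \<union> W \<subseteq> {0..<n}" and x: "x \<in> cube n" and \<pi>: "\<pi> permutes \<Union>D \<union> W"
    and budget: "card D * card W + 2 * card (\<Union>D) + card W \<le> 2 ^ k * card W"
  shows "\<exists>t. depth t \<le> k + 2 \<and> search_tree_for n x \<pi> t"
proof -
  define v where "v = perm_act \<pi> x"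
  obtain L z l where path: "z 0 = x" "z L = v" "L * card W \<le> potential v x + card W"
    "\<And>j. j \<le> L \<Longrightarrow> z j \<in> cube n"
    "\<And>j. j < L \<Longrightarrow> l j \<in> labels \<and> (\<exists>\<sigma>. \<sigma> permutes l j \<union> W \<and> z (Suc j) = perm_act \<sigma> (z j))"
    using exchange_path_to_perm_act[OF sub x \<pi>] unfolding v_def by metis
  have "L * card W \<le> 2 ^ k * card W" using path(3) potential_le[of v x] budget by linarith
  then have L: "L \<le> 2 ^ k" using finite_buffer buffer_nonempty by (simp add: card_gt_0_iff)
  define t where "t = Query x (\<lambda>a. Query v (\<lambda>b. if a = b then Leaf {} else bisect k z l a 0 L))"
  have "depth t \<le> k + 2" using depth_bisect[of k z l] by (simp add: t_def max_def)
  moreover have "search_tree_for n x \<pi> t"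
    unfolding search_tree_for_def
  proof
    fix f
    show "(run f t \<in> labels \<longleftrightarrow> f x \<noteq> f (perm_act \<pi> x)) \<and> run f t \<in> insert {} labels \<and>
      (W \<inter> asym_vars n f = {} \<longrightarrow> run f t \<noteq> {} \<longrightarrow> run f t \<inter> asym_vars n f \<noteq> {})"
    proof (cases "f x = f v")
      case True
      then show ?thesis using empty_notin_labels by (simp add: t_def v_def)
    next
      case False
      then have "0 < L" using path(1,2) by (cases L) auto
      then obtain j where j: "j < L" "f (z j) \<noteq> f (z (Suc j))" "run f (bisect k z l (f x) 0 L) = l j"
        using run_bisect[of L 0 k f z "f x" l] L path(1,2) False by auto
      obtain \<sigma> where \<sigma>: "l j \<in> labels" "\<sigma> permutes l j \<union> W" "z (Suc j) = perm_act \<sigma> (z j)"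
        using path(5)[OF j(1)] by blast
      have "l j \<union> W \<subseteq> {0..<n}" using \<sigma>(1) labels_subset sub by blast
      then have "(l j \<union> W) \<inter> asym_vars n f \<noteq> {}"
        using perm_act_changes_imp_asym_var \<sigma>(2,3) path(4) j(1,2) by (metis less_imp_le)
      then show ?thesis using False j(3) \<sigma>(1) empty_notin_labels by (auto simp: t_def v_def)
    qed
  qed
  ultimately show ?thesis by blast
qed

lemma parts_empty_iff:
  assumes U: "\<Union>D \<union> W = A - B" and "B \<subseteq> A"
  shows "D = {} \<longleftrightarrow> B \<union> W = A"
proof
  assume "D = {}"
  then have "W = A - B" using U by simp
  then show "B \<union> W = A" using \<open>B \<subseteq> A\<close> by (simp add: Un_absorb1)
next
  assume cover: "B \<union> W = A"
  have "\<Union>D \<subseteq> A - B" using U by blast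
  also have "\<dots> \<subseteq> W" unfolding Diff_subset_conv cover by simp
  finally have "\<Union>D \<subseteq> W" .
  moreover have "\<Union>D \<inter> W = {}" using part_disjoint_buffer by (simp add: Int_Union2)
  ultimately have "\<Union>D = {}" by blast
  then show "D = {}" using nonempty_parts by (metis Union_empty_conv ex_in_conv)
qed

lemma search_algorithm_exists:
  assumes sub: "\<Union>D \<union> W \<subseteq> {0..<n}"
    and budget: "card D * card W + 2 * card (\<Union>D) + card W \<le> 2 ^ k * card W"
  obtains A :: "nat set qtree pmf" where "\<And>t. t \<in> set_pmf A \<Longrightarrow> depth t \<le> k + 2"
    "\<And>f. set_pmf (map_pmf (run f) A) \<subseteq> insert {} labels"
    "\<And>f. measure_pmf.prob (map_pmf (run f) A) labels = SymInf n f (\<Union>D \<union> W)"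
    "\<And>f I. W \<inter> asym_vars n f = {} \<Longrightarrow> I \<in> set_pmf (map_pmf (run f) A) \<Longrightarrow> I \<noteq> {} \<Longrightarrow>
      I \<inter> asym_vars n f \<noteq> {}"
proof -
  define U where "U = \<Union>D \<union> W"
  have fin: "finite U" using sub finite_subset unfolding U_def by blast
  obtain T where T: "\<And>x \<pi>. x \<in> cube n \<Longrightarrow> \<pi> permutes U \<Longrightarrow>
      depth (T x \<pi>) \<le> k + 2 \<and> search_tree_for n x \<pi> (T x \<pi>)"
    using search_tree_exists[OF sub _ _ budget] unfolding U_def by metis
  define A where "A = map_pmf (case_prod T) (cube_perm_pmf n U)"
  have out: "\<exists>x \<pi>. x \<in> cube n \<and> \<pi> permutes U \<and> I = run f (T x \<pi>)"
    if "I \<in> set_pmf (map_pmf (run f) A)" for f I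
    using that by (auto simp: A_def set_cube_perm_pmf[OF fin])
  have correct: "search_tree_for n x \<pi> (T x \<pi>)" if "x \<in> cube n" "\<pi> permutes U" for x \<pi>
    using T[OF that] by blast
  show thesis
  proof
    fix t assume "t \<in> set_pmf A"
    then obtain x \<pi> where "x \<in> cube n" "\<pi> permutes U" "t = T x \<pi>" by (auto simp: A_def set_cube_perm_pmf[OF fin])
    then show "depth t \<le> k + 2" using T by blast
  next
    fix f
    show "set_pmf (map_pmf (run f) A) \<subseteq> insert {} labels"
    proof
      fix I assume "I \<in> set_pmf (map_pmf (run f) A)"
      then obtain x \<pi> where "x \<in> cube n" "\<pi> permutes U" "I = run f (T x \<pi>)" using out by blast
      then show "I \<in> insert {} labels" using search_tree_forD(2)[OF correct] by blast
    qed
    have "measure_pmf.prob (map_pmf (run f) A) labels = SymInf n f U"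
      unfolding A_def by (rule prob_run_eq_SymInf[OF fin search_tree_forD(1)[OF correct]])
    then show "measure_pmf.prob (map_pmf (run f) A) labels = SymInf n f (\<Union>D \<union> W)"
      by (simp only: U_def)
  next
    fix f I assume "W \<inter> asym_vars n f = {}" "I \<in> set_pmf (map_pmf (run f) A)" "I \<noteq> {}"
    moreover obtain x \<pi> where "x \<in> cube n" "\<pi> permutes U" "I = run f (T x \<pi>)"
      using out \<open>I \<in> set_pmf (map_pmf (run f) A)\<close> by blast
    ultimately show "I \<inter> asym_vars n f \<noteq> {}" using search_tree_forD(3)[OF correct] by blast
  qed
qed

end

lemma Diff_Union_partition_on:
  assumes part: "partition_on A P" and Q: "Q \<subseteq> P"
  shows "A - \<Union>Q = \<Union>{I\<in>P. I \<inter> \<Union>Q = {}}"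
proof
  show "\<Union>{I\<in>P. I \<inter> \<Union>Q = {}} \<subseteq> A - \<Union>Q" using partition_onD1[OF part] by blast
next
  show "A - \<Union>Q \<subseteq> \<Union>{I\<in>P. I \<inter> \<Union>Q = {}}"
  proof
    fix i assume i: "i \<in> A - \<Union>Q"
    then obtain K where K: "K \<in> P" "i \<in> K" using partition_onD1[OF part] by blast
    have "K \<inter> \<Union>Q = {}"
    proof (rule ccontr)
      assume "K \<inter> \<Union>Q \<noteq> {}"
      then obtain K' where "K' \<in> Q" "K \<inter> K' \<noteq> {}" by blast
      then have "K = K'" using partition_onD2[OF part] K Q disjointD by blast
      then show False using \<open>K' \<in> Q\<close> K i by blast
    qed
    then show "i \<in> \<Union>{I\<in>P. I \<inter> \<Union>Q = {}}" using K by blast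
  qed
qed

lemma partition_buffered_parts:
  assumes part: "partition_on {0..<n} P" and W: "W \<in> P" and Q: "Q \<subseteq> P - {W}"
  defines "D \<equiv> {I\<in>P. I \<inter> \<Union>Q = {}} - {W}"
  shows "buffered_parts D W" and "card D < card P" and "\<Union>D \<union> W = {0..<n} - \<Union>Q"
    and "buffered_parts.labels D W = {I\<in>P. I \<inter> \<Union>Q = {} \<and> (I = W \<longrightarrow> \<Union>Q \<union> W = {0..<n})}"
proof -
  have UP: "\<Union>P = {0..<n}" using partition_onD1[OF part] by simp
  have disj: "K \<inter> K' = {}" if "K \<in> P" "K' \<in> P" "K \<noteq> K'" for K K'
    using partition_onD2[OF part] that disjointD by blast
  have nonempty: "{} \<notin> P" using partition_onD3[OF part] .
  have finP: "finite P" by (rule finite_subset[of _ "Pow {0..<n}"]) (use UP in auto)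
  have finK: "finite K" if "K \<in> P" for K
  proof (rule finite_subset)
    show "K \<subseteq> {0..<n}" using that UP by blast
  qed simp
  show parts: "buffered_parts D W"
    by unfold_locales (use finP finK W nonempty disj in \<open>auto simp: D_def\<close>)
  have "card D \<le> card (P - {W})" using finP by (intro card_mono) (auto simp: D_def)
  moreover have "0 < card P" using W finP card_gt_0_iff by blast
  ultimately show "card D < card P" using W finP by (simp add: card_Diff_singleton)
  have "W \<inter> \<Union>Q = {}" using Q disj W by blast
  then have free: "{I\<in>P. I \<inter> \<Union>Q = {}} = insert W D" using W by (auto simp: D_def)
  have "Q \<subseteq> P" using Q by blast
  then have "{0..<n} - \<Union>Q = \<Union>(insert W D)" unfolding free[symmetric]
    by (rule Diff_Union_partition_on[OF part])
  then show U: "\<Union>D \<union> W = {0..<n} - \<Union>Q" by auto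
  have "\<Union>Q \<subseteq> {0..<n}" using Q UP by blast
  with U have cover: "D = {} \<longleftrightarrow> \<Union>Q \<union> W = {0..<n}"
    by (rule buffered_parts.parts_empty_iff[OF parts])
  show "buffered_parts.labels D W =
      {I\<in>P. I \<inter> \<Union>Q = {} \<and> (I = W \<longrightarrow> \<Union>Q \<union> W = {0..<n})}"
  proof (cases "D = {}")
    case True
    then show ?thesis unfolding buffered_parts.labels_def[OF parts] using cover free by simp
  next
    case False
    then have "{I\<in>P. I \<inter> \<Union>Q = {} \<and> (I = W \<longrightarrow> \<Union>Q \<union> W = {0..<n})} =
        {I\<in>P. I \<inter> \<Union>Q = {}} - {W}"
      using cover by blast
    with False show ?thesis unfolding buffered_parts.labels_def[OF parts] by (simp add: D_def)
  qed
qed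

lemma exists_pow2_ge_log:
  assumes "1 \<le> r"
  shows "\<exists>k. r \<le> 2 ^ k \<and> real k \<le> 1 + log 2 (real r)"
proof (intro exI conjI)
  have nonneg: "0 \<le> log 2 (real r)" using assms by simp
  have "real r = 2 powr (log 2 (real r))" using assms by simp
  also have "\<dots> \<le> 2 powr real (nat \<lceil>log 2 (real r)\<rceil>)" using nonneg by (intro powr_mono) auto
  also have "\<dots> = real (2 ^ nat \<lceil>log 2 (real r)\<rceil>)" by (simp add: powr_realpow)
  finally show "r \<le> 2 ^ nat \<lceil>log 2 (real r)\<rceil>" by (simp only: of_nat_le_iff)
  show "real (nat \<lceil>log 2 (real r)\<rceil>) \<le> 1 + log 2 (real r)" using nonneg by linarith
qed

lemma budget_le_pow2:
  fixes d m r w k :: nat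
  assumes "d < r" "real m \<le> 2 * real r * real w" "r \<le> 2 ^ k"
  shows "d * w + 2 * m + w \<le> 2 ^ (k + 3) * w"
proof -
  have "d * w + w \<le> r * w" using mult_le_mono1[of "d + 1" r w] assms(1) by simp
  moreover have "real m \<le> real (2 * (r * w))" using assms(2) by simp
  then have "m \<le> 2 * (r * w)" by (simp only: of_nat_le_iff)
  moreover have "r * w \<le> 2 ^ k * w" using assms(3) by (rule mult_le_mono1)
  moreover have "2 ^ (k + 3) * w = 8 * (2 ^ k * w)" by (simp add: power_add)
  ultimately show ?thesis by linarith
qed

lemma search_algorithm_for_partition:
  assumes part: "partition_on {0..<n} P" and W: "W \<in> P" and Q: "Q \<subseteq> P - {W}"
    and size: "real (card W) \<ge> real n / (2 * real (card P))"
  shows "\<exists>A :: nat set qtree pmf.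
    (\<forall>T\<in>set_pmf A. real (depth T) \<le> 6 * (1 + log 2 (real (card P)))) \<and>
    (\<forall>f. let out = map_pmf (run f) A;
             good = {I\<in>P. I \<inter> \<Union>Q = {} \<and> (I = W \<longrightarrow> \<Union>Q \<union> W = {0..<n})}
         in set_pmf out \<subseteq> good \<union> {{}} \<and>
            measure_pmf.prob out good = SymInf n f ({0..<n} - \<Union>Q) \<and>
            (W \<inter> asym_vars n f = {} \<longrightarrow> (\<forall>I\<in>set_pmf out. I \<in> P \<longrightarrow> I \<inter> asym_vars n f \<noteq> {})))"
proof -
  define D where "D = {I\<in>P. I \<inter> \<Union>Q = {}} - {W}"
  note parts = partition_buffered_parts[OF part W Q, folded D_def]
  interpret buffered_parts D W by (rule parts(1))
  have r: "1 \<le> card P" using parts(2) by linarith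
  obtain k where k: "card P \<le> 2 ^ k" "real k \<le> 1 + log 2 (real (card P))"
    using exists_pow2_ge_log[OF r] by blast
  have sub: "\<Union>D \<union> W \<subseteq> {0..<n}" using parts(3) by blast
  then have "card (\<Union>D) \<le> n" using card_mono[of "{0..<n}" "\<Union>D"] by simp
  moreover have "real n \<le> 2 * real (card P) * real (card W)" using size r by (simp add: field_simps)
  ultimately have "card D * card W + 2 * card (\<Union>D) + card W \<le> 2 ^ (k + 3) * card W"
    using budget_le_pow2[OF parts(2) _ k(1)] by simp
  then obtain A where A: "\<And>t. t \<in> set_pmf A \<Longrightarrow> depth t \<le> k + 3 + 2"
    "\<And>f. set_pmf (map_pmf (run f) A) \<subseteq> insert {} labels"
    "\<And>f. measure_pmf.prob (map_pmf (run f) A) labels = SymInf n f (\<Union>D \<union> W)"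
    "\<And>f I. W \<inter> asym_vars n f = {} \<Longrightarrow> I \<in> set_pmf (map_pmf (run f) A) \<Longrightarrow> I \<noteq> {} \<Longrightarrow>
      I \<inter> asym_vars n f \<noteq> {}"
    using search_algorithm_exists[OF sub] by blast
  have "real (depth t) \<le> 6 * (1 + log 2 (real (card P)))" if "t \<in> set_pmf A" for t
  proof -
    have "real (depth t) \<le> real k + 5" using A(1)[OF that] by linarith
    moreover have "0 \<le> log 2 (real (card P))" using r by simp
    ultimately show ?thesis using k(2) unfolding distrib_left by linarith
  qed
  then show ?thesis
    unfolding Let_def parts(3,4)[symmetric]
    by (intro exI[of _ A] conjI allI ballI impI)
      (use A(2-4) partition_onD3[OF part] in blast)+
qed

theorem lemma6:
  "\<exists>C::real. \<forall>(n::nat) (P::nat set set) (W::nat set) (J::nat set).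
     partition_on {0..<n} P \<and> W \<in> P \<and> real (card W) \<ge> real n / (2 * real (card P)) \<and>
     (\<exists>Q. Q \<subseteq> P - {W} \<and> J = \<Union>Q)
     \<longrightarrow>
     (\<exists>A :: nat set qtree pmf.
        (\<forall>T\<in>set_pmf A. real (depth T) \<le> C * (1 + log 2 (real (card P)))) \<and>
        (\<forall>f :: (nat \<Rightarrow> bool) \<Rightarrow> bool.
           (let out = map_pmf (run f) A;
                good = {I\<in>P. I \<inter> J = {} \<and> (I = W \<longrightarrow> J \<union> W = {0..<n})}
            in set_pmf out \<subseteq> good \<union> {{}} \<and>
               measure_pmf.prob out good = SymInf n f ({0..<n} - J) \<and>
               (W \<inter> asym_vars n f = {} \<longrightarrow>
                  (\<forall>I\<in>set_pmf out. I \<in> P \<longrightarrow> I \<inter> asym_vars n f \<noteq> {})))))"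
  by (intro exI[of _ 6] allI impI, elim conjE exE, hypsubst)
    (rule search_algorithm_for_partition)

end
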